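(* Let $(M,\mathcal F,\mathcal J)$ be a generalized almost para-Hermitian manifold with associated triple $(\gamma,\psi,F)$ and let $\iota:N\hookrightarrow M$ be a submanifold. Then $N$ is a regular invariant submanifold if and only if the subspaces $\overleftarrow{\iota}^*\mathbf H_+,\overleftarrow{\iota}^*\mathbf H_-,\overleftarrow{\iota}^*\overline{\mathbf H}_+,\overleftarrow{\iota}^*\overline{\mathbf H}_-$ give a decomposition $$\mathbf T^cN=\overleftarrow{\iota}^*\mathbf H_+\oplus\overleftarrow{\iota}^*\mathbf H_-\oplus\overleftarrow{\iota}^*\overline{\mathbf H}_+\oplus\overleftarrow{\iota}^*\overline{\mathbf H}_-$$ which defines a generalized almost para-Hermitian structure on $N$ (i.e. $\overleftarrow{\iota}^*\mathbf H_\pm\oplus\overleftarrow{\iota}^*\overline{\mathbf H}_\pm$ are the $\pm1$-eigenbundles of a generalized almost paracomplex structure $\mathcal F_N$ and $\overleftarrow{\iota}^*\mathbf H_+\oplus\overleftarrow{\iota}^*\overline{\mathbf H}_-$ is the $i$-eigenbundle of a generalized almost complex structure $\mathcal J_N$, with $(\mathcal F_N,\mathcal J_N)$ generalized almost para-Hermitian). In this case the structure so defined is the one whose associated triple is $(\iota^*\gamma,\iota^*\psi,F|_{T^cN})$.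
   Context: $\mathbf TM=TM\oplus T^*M$ with pairing $g((X,\alpha),(Y,\beta))=\frac12(\alpha(Y)+\beta(X))$; superscript $c$ = complexification, bar = conjugation. A generalized almost para-Hermitian structure is a commuting pair $(\mathcal F,\mathcal J)$ with $\mathcal F^2=\mathrm{Id}$, $\mathcal J^2=-\mathrm{Id}$, both $g$-skew, and non-degenerate symmetric bivector $\gamma(\alpha,\beta)=-2g(\mathcal F(0,\alpha),\mathcal J(0,\beta))$. $\mathbf F_\pm$ are the $\pm1$-eigenbundles of $\mathcal F$, $\mathcal H=\mathcal F\mathcal J$, $\mathbf H$ its $i$-eigenbundle and $\mathbf H_\pm=\mathbf F_\pm\cap\mathbf H$. Associated triple: $\gamma$ also denotes the inverse pseudo-Riemannian metric on $TM$; with $\mathcal H(X,0)=(QX,\ast)$, $\psi(X,Y)=-\gamma(QX,Y)$; $\mathbf H=\tau(T^cM)$, $\tau(X)=(X,\psi(X,\cdot)+i\gamma(X,\cdot))$; $FX=\mathrm{pr}_{T^cM}\mathcal F(\tau X)$ (so $F^2=\mathrm{Id}$, $\gamma(FX,Y)=-\gamma(X,FY)$); every such triple determines a unique structure. A submanifold $N$ is regular invariant if $\iota^*\gamma$ is non-degenerate and $T^cN$ is $F$-invariant. Pullback: for $U\subseteq\mathbf T^c_xM$, $\overleftarrow{\iota}^*U=\{(X,\iota^*\eta):X\in T^c_xN,\ (\iota_*X,\eta)\in U\}\subseteq\mathbf T^c_xN$. *)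

theory Defs
  imports "HOL-Analysis.Analysis"
begin

text \<open>Pointwise (fibrewise) linear-algebra model.  The tangent space T_xM is
  real^'m, covectors are identified with real^'m via the standard pairing
  (alpha(X) = sum of alpha_i X_i), so the generalized tangent space is
  real^'m \<times> real^'m.\<close>

type_synonym ('m) gtan = "(real^('m::finite)) \<times> (real^'m)"
type_synonym ('m) cgtan = "(complex^('m::finite)) \<times> (complex^'m)"

definition dotc :: "complex^'m::finite \<Rightarrow> complex^'m \<Rightarrow> complex" where
  "dotc a X = (\<Sum>i\<in>UNIV. a$i * X$i)"

definition gR :: "'m::finite gtan \<Rightarrow> 'm gtan \<Rightarrow> real" where
  "gR u v = ((snd u) \<bullet> (fst v) + (snd v) \<bullet> (fst u)) / 2"

definition gC :: "'m::finite cgtan \<Rightarrow> 'm cgtan \<Rightarrow> complex" where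
  "gC u v = (dotc (snd u) (fst v) + dotc (snd v) (fst u)) / 2"

definition reV :: "complex^'m::finite \<Rightarrow> real^'m" where "reV z = (\<chi> i. Re (z$i))"
definition imV :: "complex^'m::finite \<Rightarrow> real^'m" where "imV z = (\<chi> i. Im (z$i))"
definition cmb :: "real^'m::finite \<Rightarrow> real^'m \<Rightarrow> complex^'m" where
  "cmb x y = (\<chi> i. Complex (x$i) (y$i))"

definition cx :: "(real^'a::finite \<Rightarrow> real^'b::finite) \<Rightarrow> complex^'a \<Rightarrow> complex^'b" where
  "cx f z = cmb (f (reV z)) (f (imV z))"

definition cxT :: "('a::finite gtan \<Rightarrow> 'b::finite gtan) \<Rightarrow> 'a cgtan \<Rightarrow> 'b cgtan" where
  "cxT f u = (let r = f (reV (fst u), reV (snd u)); s = f (imV (fst u), imV (snd u))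
              in (cmb (fst r) (fst s), cmb (snd r) (snd s)))"

definition cxb :: "(real^'m::finite \<Rightarrow> real^'m \<Rightarrow> real) \<Rightarrow> complex^'m \<Rightarrow> complex^'m \<Rightarrow> complex" where
  "cxb b z w = Complex (b (reV z) (reV w) - b (imV z) (imV w)) (b (reV z) (imV w) + b (imV z) (reV w))"

definition scT :: "complex \<Rightarrow> 'm::finite cgtan \<Rightarrow> 'm cgtan" where
  "scT c u = (c *s fst u, c *s snd u)"

definition cnjT :: "'m::finite cgtan \<Rightarrow> 'm cgtan" where
  "cnjT u = ((\<chi> i. cnj (fst u $ i)), (\<chi> i. cnj (snd u $ i)))"

definition bar :: "'m::finite cgtan set \<Rightarrow> 'm cgtan set" where
  "bar U = cnjT ` U"

definition setsum2 :: "'m::finite cgtan set \<Rightarrow> 'm cgtan set \<Rightarrow> 'm cgtan set" where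
  "setsum2 U V = {a + b | a b. a \<in> U \<and> b \<in> V}"

definition direct_sum4 :: "'m::finite cgtan set \<Rightarrow> 'm cgtan set \<Rightarrow> 'm cgtan set \<Rightarrow> 'm cgtan set \<Rightarrow> bool" where
  "direct_sum4 U1 U2 U3 U4 \<longleftrightarrow>
     (\<forall>u. \<exists>!(a,b,c,d). a \<in> U1 \<and> b \<in> U2 \<and> c \<in> U3 \<and> d \<in> U4 \<and> u = a + b + c + d)"

definition bivec :: "('m::finite gtan \<Rightarrow> 'm gtan) \<Rightarrow> ('m gtan \<Rightarrow> 'm gtan) \<Rightarrow> real^'m \<Rightarrow> real^'m \<Rightarrow> real" where
  "bivec F J \<alpha> \<beta> = - 2 * gR (F (0, \<alpha>)) (J (0, \<beta>))"

definition gaph :: "('m::finite gtan \<Rightarrow> 'm gtan) \<Rightarrow> ('m gtan \<Rightarrow> 'm gtan) \<Rightarrow> bool" where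
  "gaph F J \<longleftrightarrow> linear F \<and> linear J \<and>
     (\<forall>u. F (F u) = u) \<and> (\<forall>u. J (J u) = - u) \<and>
     (\<forall>u v. gR (F u) v = - gR u (F v)) \<and> (\<forall>u v. gR (J u) v = - gR u (J v)) \<and>
     (\<forall>u. F (J u) = J (F u)) \<and>
     (\<forall>\<alpha> \<beta>. bivec F J \<alpha> \<beta> = bivec F J \<beta> \<alpha>) \<and>
     (\<forall>\<alpha>. (\<forall>\<beta>. bivec F J \<alpha> \<beta> = 0) \<longrightarrow> \<alpha> = 0)"

definition Fplus :: "('m::finite gtan \<Rightarrow> 'm gtan) \<Rightarrow> 'm cgtan set" where
  "Fplus F = {u. cxT F u = u}"
definition Fminus :: "('m::finite gtan \<Rightarrow> 'm gtan) \<Rightarrow> 'm cgtan set" where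
  "Fminus F = {u. cxT F u = - u}"
definition Jeig :: "('m::finite gtan \<Rightarrow> 'm gtan) \<Rightarrow> 'm cgtan set" where
  "Jeig J = {u. cxT J u = scT \<i> u}"
definition Hbun :: "('m::finite gtan \<Rightarrow> 'm gtan) \<Rightarrow> ('m gtan \<Rightarrow> 'm gtan) \<Rightarrow> 'm cgtan set" where
  "Hbun F J = {u. cxT (F \<circ> J) u = scT \<i> u}"
definition Hplus where "Hplus F J = Fplus F \<inter> Hbun F J"
definition Hminus where "Hminus F J = Fminus F \<inter> Hbun F J"

definition sharp :: "('m::finite gtan \<Rightarrow> 'm gtan) \<Rightarrow> ('m gtan \<Rightarrow> 'm gtan) \<Rightarrow> real^'m \<Rightarrow> real^'m" where
  "sharp F J \<alpha> = (\<chi> k. bivec F J \<alpha> (axis k 1))"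

definition metric :: "('m::finite gtan \<Rightarrow> 'm gtan) \<Rightarrow> ('m gtan \<Rightarrow> 'm gtan) \<Rightarrow> real^'m \<Rightarrow> real^'m \<Rightarrow> real" where
  "metric F J X Y = bivec F J (THE \<alpha>. sharp F J \<alpha> = X) (THE \<beta>. sharp F J \<beta> = Y)"

definition Qop :: "('m::finite gtan \<Rightarrow> 'm gtan) \<Rightarrow> ('m gtan \<Rightarrow> 'm gtan) \<Rightarrow> real^'m \<Rightarrow> real^'m" where
  "Qop F J X = fst (F (J (X, 0)))"

definition psi :: "('m::finite gtan \<Rightarrow> 'm gtan) \<Rightarrow> ('m gtan \<Rightarrow> 'm gtan) \<Rightarrow> real^'m \<Rightarrow> real^'m \<Rightarrow> real" where
  "psi F J X Y = - metric F J (Qop F J X) Y"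

definition tau :: "('m::finite gtan \<Rightarrow> 'm gtan) \<Rightarrow> ('m gtan \<Rightarrow> 'm gtan) \<Rightarrow> complex^'m \<Rightarrow> 'm cgtan" where
  "tau F J X = (X, (\<chi> j. cxb (psi F J) X (axis j 1) + \<i> * cxb (metric F J) X (axis j 1)))"

definition Fop :: "('m::finite gtan \<Rightarrow> 'm gtan) \<Rightarrow> ('m gtan \<Rightarrow> 'm gtan) \<Rightarrow> complex^'m \<Rightarrow> complex^'m" where
  "Fop F J X = fst (cxT F (tau F J X))"

definition pb_cov :: "(real^'n::finite \<Rightarrow> real^'m::finite) \<Rightarrow> complex^'m \<Rightarrow> complex^'n" where
  "pb_cov \<iota> \<eta> = (\<chi> j. dotc \<eta> (cx \<iota> (axis j 1)))"

definition pbT :: "(real^'n::finite \<Rightarrow> real^'m::finite) \<Rightarrow> 'm cgtan set \<Rightarrow> 'n cgtan set" where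
  "pbT \<iota> U = {(X, pb_cov \<iota> \<eta>) | X \<eta>. (cx \<iota> X, \<eta>) \<in> U}"

definition pb_form :: "(real^'n::finite \<Rightarrow> real^'m::finite) \<Rightarrow> (real^'m \<Rightarrow> real^'m \<Rightarrow> real) \<Rightarrow> real^'n \<Rightarrow> real^'n \<Rightarrow> real" where
  "pb_form \<iota> b X Y = b (\<iota> X) (\<iota> Y)"

text \<open>Regular invariant: iota^* gamma non-degenerate and T^cN is F-invariant.\<close>
definition regular_invariant ::
  "('m::finite gtan \<Rightarrow> 'm gtan) \<Rightarrow> ('m gtan \<Rightarrow> 'm gtan) \<Rightarrow> (real^'n::finite \<Rightarrow> real^'m) \<Rightarrow> bool" where
  "regular_invariant F J \<iota> \<longleftrightarrow>
     (\<forall>X. (\<forall>Y. pb_form \<iota> (metric F J) X Y = 0) \<longrightarrow> X = 0) \<and>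
     (\<forall>X. \<exists>Y. Fop F J (cx \<iota> X) = cx \<iota> Y)"

end

theory Submission
  imports Defs
begin

text \<open>
  The i-eigenbundle of H = F J is the graph of tau over the complexified tangent space. At the
  real level, a vector r of TM \<oplus> T*M is determined by the vector part A of r and the vector
  part B of H r: r = graph_point A B = (A, psi_flat A + metric_flat B).

  If N is regular invariant, the real subspace of those r with A and B tangent to N is invariant
  under F (this is where the F-invariance of T^cN enters) and under H, hence under J, and it is
  identified with TN \<oplus> T*N by pulling back covectors; the identification is bijective because
  \<iota>*\<gamma> is non-degenerate. Transporting F and J along it gives a structure on N whose bundles
  H+ and H- are the pullbacks of those of M, so the decompositions are those of N.

  Conversely, if the pullbacks are the eigenbundles of a structure on N, its bundles H+ and H-
  are the pullbacks of those of M. Splitting tau_N X along H+ \<oplus> H- and comparing with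
  tau (\<iota> X) identifies the associated triple of N with (\<iota>*\<gamma>, \<iota>*\<psi>, F restricted to T^cN),
  which in turn gives regular invariance.
\<close>

section \<open>Real and imaginary parts\<close>

definition reT :: "'m::finite cgtan \<Rightarrow> 'm gtan" where
  "reT u = (reV (fst u), reV (snd u))"

definition imT :: "'m::finite cgtan \<Rightarrow> 'm gtan" where
  "imT u = (imV (fst u), imV (snd u))"

definition cmbT :: "'m::finite gtan \<Rightarrow> 'm gtan \<Rightarrow> 'm cgtan" where
  "cmbT r s = (cmb (fst r) (fst s), cmb (snd r) (snd s))"

definition cnjV :: "complex^'m::finite \<Rightarrow> complex^'m" where
  "cnjV z = (\<chi> i. cnj (z $ i))"

lemma reV_cmb [simp]: "reV (cmb x y) = x"
  by (simp add: reV_def cmb_def vec_eq_iff)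

lemma imV_cmb [simp]: "imV (cmb x y) = y"
  by (simp add: imV_def cmb_def vec_eq_iff)

lemma cmb_reV_imV [simp]: "cmb (reV z) (imV z) = z"
  by (simp add: reV_def imV_def cmb_def vec_eq_iff complex_eq_iff)

lemma cmb_eq_iff: "cmb x y = cmb x' y' \<longleftrightarrow> x = x' \<and> y = y'"
  by (metis reV_cmb imV_cmb)

lemma cmb_add [simp]: "cmb x y + cmb x' y' = cmb (x + x') (y + y')"
  by (simp add: cmb_def vec_eq_iff complex_eq_iff)

lemma cmb_diff [simp]: "cmb x y - cmb x' y' = cmb (x - x') (y - y')"
  by (simp add: cmb_def vec_eq_iff complex_eq_iff)

lemma cmb_zero [simp]: "cmb 0 0 = 0"
  by (simp add: cmb_def vec_eq_iff complex_eq_iff)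

lemma reV_arith [simp]:
  "reV (z + w) = reV z + reV w" "reV (z - w) = reV z - reV w" "reV (- z) = - reV z"
  "reV 0 = 0" "reV (c *\<^sub>R z) = c *\<^sub>R reV z"
  by (simp_all add: reV_def vec_eq_iff)

lemma imV_arith [simp]:
  "imV (z + w) = imV z + imV w" "imV (z - w) = imV z - imV w" "imV (- z) = - imV z"
  "imV 0 = 0" "imV (c *\<^sub>R z) = c *\<^sub>R imV z"
  by (simp_all add: imV_def vec_eq_iff)

lemma reV_axis [simp]: "reV (axis j (1::complex)) = axis j 1"
  and imV_axis [simp]: "imV (axis j (1::complex)) = 0"
  by (simp_all add: reV_def imV_def axis_def vec_eq_iff)

lemma cnjV_eq_cmb: "cnjV z = cmb (reV z) (- imV z)"
  by (simp add: cnjV_def cmb_def reV_def imV_def vec_eq_iff complex_eq_iff)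

lemma cnjV_cnjV [simp]: "cnjV (cnjV z) = z"
  by (simp add: cnjV_def vec_eq_iff)

lemma reT_cmbT [simp]: "reT (cmbT r s) = r"
  and imT_cmbT [simp]: "imT (cmbT r s) = s"
  by (simp_all add: reT_def imT_def cmbT_def)

lemma cgtan_eq_iff: "u = v \<longleftrightarrow> reT u = reT v \<and> imT u = imT v"
  by (metis cmb_reV_imV prod.collapse reT_def imT_def prod.inject)

lemma reT_arith [simp]:
  "reT (u + v) = reT u + reT v" "reT (u - v) = reT u - reT v" "reT (- u) = - reT u"
  "reT 0 = 0" "reT (c *\<^sub>R u) = c *\<^sub>R reT u"
  by (simp_all add: reT_def zero_prod_def)

lemma imT_arith [simp]:
  "imT (u + v) = imT u + imT v" "imT (u - v) = imT u - imT v" "imT (- u) = - imT u"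
  "imT 0 = 0" "imT (c *\<^sub>R u) = c *\<^sub>R imT u"
  by (simp_all add: imT_def zero_prod_def)

lemma reT_scT_i [simp]: "reT (scT \<i> u) = - imT u"
  and imT_scT_i [simp]: "imT (scT \<i> u) = reT u"
  by (simp_all add: reT_def imT_def scT_def reV_def imV_def vec_eq_iff)

lemma cnjT_eq: "cnjT u = (cnjV (fst u), cnjV (snd u))"
  by (simp add: cnjT_def cnjV_def)

lemma reT_cnjT [simp]: "reT (cnjT u) = reT u"
  and imT_cnjT [simp]: "imT (cnjT u) = - imT u"
  by (simp_all add: reT_def imT_def cnjT_eq cnjV_eq_cmb)

lemma cnjT_cnjT [simp]: "cnjT (cnjT u) = u"
  by (simp add: cgtan_eq_iff)

lemma cxT_eq_cmbT: "cxT f u = cmbT (f (reT u)) (f (imT u))"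
  by (simp add: cxT_def cmbT_def reT_def imT_def Let_def)

lemma reT_cxT [simp]: "reT (cxT f u) = f (reT u)"
  and imT_cxT [simp]: "imT (cxT f u) = f (imT u)"
  by (simp_all add: cxT_eq_cmbT)

lemma cxT_comp: "cxT f (cxT g u) = cxT (f \<circ> g) u"
  by (simp add: cgtan_eq_iff)

lemma cxT_id: "(\<And>x. f x = x) \<Longrightarrow> cxT f u = u"
  by (simp add: cgtan_eq_iff)

lemma inj_cxT: "inj f \<Longrightarrow> inj (cxT f)"
  by (rule injI) (metis cgtan_eq_iff reT_cxT imT_cxT injD)

lemma cxT_linear:
  assumes "linear f"
  shows "cxT f (u + v) = cxT f u + cxT f v" and "cxT f (- u) = - cxT f u"
    and "cxT f (scT \<i> u) = scT \<i> (cxT f u)"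
  using assms by (simp_all add: cgtan_eq_iff linear_add linear_neg)

lemma Fplus_iff: "u \<in> Fplus f \<longleftrightarrow> f (reT u) = reT u \<and> f (imT u) = imT u"
  by (simp add: Fplus_def cgtan_eq_iff)

lemma Fminus_iff: "u \<in> Fminus f \<longleftrightarrow> f (reT u) = - reT u \<and> f (imT u) = - imT u"
  by (simp add: Fminus_def cgtan_eq_iff)

lemma Jeig_iff: "u \<in> Jeig f \<longleftrightarrow> f (reT u) = - imT u \<and> f (imT u) = reT u"
  by (simp add: Jeig_def cgtan_eq_iff)

lemma Hbun_eq_Jeig: "Hbun F J = Jeig (F \<circ> J)"
  by (simp add: Hbun_def Jeig_def)

lemma Hbun_iff: "u \<in> Hbun F J \<longleftrightarrow> F (J (reT u)) = - imT u \<and> F (J (imT u)) = reT u"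
  by (simp add: Hbun_eq_Jeig Jeig_iff)

lemma bar_iff: "u \<in> bar U \<longleftrightarrow> cnjT u \<in> U"
  unfolding bar_def by (metis cnjT_cnjT image_iff)

lemma bar_bar [simp]: "bar (bar U) = U"
  by (auto simp: bar_iff)

lemma intertwining_eigen_iff:
  fixes E :: "'n::finite gtan \<Rightarrow> 'm::finite gtan"
  assumes "linear E" and "inj E" and intertwine: "\<And>x. E (f x) = g (E x)"
  shows "u \<in> Fplus f \<longleftrightarrow> cxT E u \<in> Fplus g"
    and "u \<in> Fminus f \<longleftrightarrow> cxT E u \<in> Fminus g"
    and "u \<in> Jeig f \<longleftrightarrow> cxT E u \<in> Jeig g"
proof -
  have comm: "cxT g (cxT E u) = cxT E (cxT f u)"
    by (simp add: cgtan_eq_iff intertwine)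
  have inj: "cxT E v = cxT E w \<longleftrightarrow> v = w" for v w
    using inj_cxT[OF \<open>inj E\<close>] by (simp add: inj_eq)
  note lin = cxT_linear[OF \<open>linear E\<close>, symmetric]
  show "u \<in> Fplus f \<longleftrightarrow> cxT E u \<in> Fplus g"
    and "u \<in> Fminus f \<longleftrightarrow> cxT E u \<in> Fminus g"
    and "u \<in> Jeig f \<longleftrightarrow> cxT E u \<in> Jeig g"
    unfolding Fplus_def Fminus_def Jeig_def by (simp_all only: mem_Collect_eq comm lin inj)
qed

section \<open>Sums of subspaces\<close>

lemma self_eq_minus_iff: "(x::'a::real_vector) = - x \<longleftrightarrow> x = 0"
  and minus_eq_self_iff: "- x = x \<longleftrightarrow> x = 0"
proof -
  show "x = - x \<longleftrightarrow> x = 0"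
  proof
    assume "x = - x"
    then have "(2::real) *\<^sub>R x = 0"
      by (metis add.right_inverse scaleR_2)
    then show "x = 0"
      by simp
  qed simp
  then show "- x = x \<longleftrightarrow> x = 0"
    by auto
qed

lemma minus_eq_iff_eq_minus: "- a = b \<longleftrightarrow> a = - (b::'a::ab_group_add)"
  by auto

lemma half_plus_half [simp]:
  "(1/2) *\<^sub>R x + (1/2) *\<^sub>R x = (x::'a::real_vector)"
  "(1/2) *\<^sub>R x + ((1/2) *\<^sub>R x + y) = x + y"
  by (simp_all flip: scaleR_add_left add.assoc)

lemma setsum2_left: "x \<in> A \<Longrightarrow> 0 \<in> B \<Longrightarrow> x \<in> setsum2 A B"
  unfolding setsum2_def by (metis (mono_tags, lifting) add.right_neutral mem_Collect_eq)

lemma setsum2_right: "0 \<in> A \<Longrightarrow> x \<in> B \<Longrightarrow> x \<in> setsum2 A B"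
  unfolding setsum2_def by (metis (mono_tags, lifting) add.left_neutral mem_Collect_eq)

lemma setsum2_diffI:
  assumes "a \<in> A" and "u - a \<in> B"
  shows "u \<in> setsum2 A B"
proof -
  have "u = a + (u - a)"
    by simp
  with assms show ?thesis
    unfolding setsum2_def by blast
qed

lemma setsum2_eq_left:
  assumes "X \<subseteq> setsum2 A B" and "A \<subseteq> X" and "B \<inter> X \<subseteq> {0}"
    and "\<And>x y. x \<in> X \<Longrightarrow> y \<in> X \<Longrightarrow> x - y \<in> X"
  shows "X = A"
proof
  show "X \<subseteq> A"
  proof
    fix x assume "x \<in> X"
    then obtain a b where "a \<in> A" "b \<in> B" "x = a + b"
      using assms(1) unfolding setsum2_def by blast
    moreover from this have "b \<in> X"
      using assms(2,4) \<open>x \<in> X\<close> by (metis add_diff_cancel_left' subsetD)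
    ultimately show "x \<in> A"
      using assms(3) by auto
  qed
qed (rule assms(2))

lemma direct_sum4I:
  assumes split: "\<And>u. \<exists>a b c d. a \<in> U1 \<and> b \<in> U2 \<and> c \<in> U3 \<and> d \<in> U4 \<and> u = a + b + c + d"
    and indep: "\<And>a b c d. a \<in> U1 \<Longrightarrow> b \<in> U2 \<Longrightarrow> c \<in> U3 \<Longrightarrow> d \<in> U4 \<Longrightarrow>
      a + b + c + d = 0 \<Longrightarrow> a = 0 \<and> b = 0 \<and> c = 0 \<and> d = 0"
    and "\<And>x y. x \<in> U1 \<Longrightarrow> y \<in> U1 \<Longrightarrow> x - y \<in> U1"
    and "\<And>x y. x \<in> U2 \<Longrightarrow> y \<in> U2 \<Longrightarrow> x - y \<in> U2"
    and "\<And>x y. x \<in> U3 \<Longrightarrow> y \<in> U3 \<Longrightarrow> x - y \<in> U3"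
    and "\<And>x y. x \<in> U4 \<Longrightarrow> y \<in> U4 \<Longrightarrow> x - y \<in> U4"
  shows "direct_sum4 U1 U2 U3 U4"
  unfolding direct_sum4_def
proof
  fix u
  obtain a b c d where abcd: "a \<in> U1" "b \<in> U2" "c \<in> U3" "d \<in> U4" "u = a + b + c + d"
    using split by blast
  show "\<exists>!(a, b, c, d). a \<in> U1 \<and> b \<in> U2 \<and> c \<in> U3 \<and> d \<in> U4 \<and> u = a + b + c + d"
  proof (rule ex1I[of _ "(a, b, c, d)"])
    fix x
    assume "case x of (a', b', c', d') \<Rightarrow>
      a' \<in> U1 \<and> b' \<in> U2 \<and> c' \<in> U3 \<and> d' \<in> U4 \<and> u = a' + b' + c' + d'"
    then obtain a' b' c' d' where x: "x = (a', b', c', d')" and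
      abcd': "a' \<in> U1" "b' \<in> U2" "c' \<in> U3" "d' \<in> U4" "u = a' + b' + c' + d'"
      by (cases x) auto
    have "(a' - a) + (b' - b) + (c' - c) + (d' - d) = 0"
      using abcd(5) abcd'(5) by (simp add: algebra_simps)
    with indep[of "a' - a" "b' - b" "c' - c" "d' - d"] abcd abcd' assms(3-6)
    show "x = (a, b, c, d)"
      by (simp add: x)
  qed (use abcd in simp)
qed

lemma bar_mono: "A \<subseteq> B \<Longrightarrow> bar A \<subseteq> bar B"
  by (auto simp: bar_def)

section \<open>Pullbacks\<close>

lemma pbT_iff: "u \<in> pbT \<iota> U \<longleftrightarrow> (\<exists>\<eta>. (cx \<iota> (fst u), \<eta>) \<in> U \<and> snd u = pb_cov \<iota> \<eta>)"
  by (cases u) (auto simp: pbT_def)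

lemma cx_cmb: "cx \<iota> (cmb A B) = cmb (\<iota> A) (\<iota> B)"
  by (simp add: cx_def)

lemma cx_linear:
  assumes "linear \<iota>"
  shows "cx \<iota> (X + Y) = cx \<iota> X + cx \<iota> Y" and "cx \<iota> (X - Y) = cx \<iota> X - cx \<iota> Y"
    and "cx \<iota> 0 = 0"
  using assms by (simp_all add: cx_def linear_add linear_diff linear_0)

lemma pb_cov_eq:
  assumes "linear \<iota>"
  shows "pb_cov \<iota> \<eta> = cmb (adjoint \<iota> (reV \<eta>)) (adjoint \<iota> (imV \<eta>))"
proof -
  have "adjoint \<iota> v $ j = v \<bullet> \<iota> (axis j 1)" for v j
    using adjoint_clauses(2)[OF assms, of v "axis j 1"] by (simp add: inner_axis)
  moreover have "cx \<iota> (axis j 1) = cmb (\<iota> (axis j 1)) 0" for j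
    using assms by (simp add: cx_def linear_0)
  ultimately show ?thesis
    by (simp add: pb_cov_def dotc_def cmb_def vec_eq_iff inner_vec_def reV_def imV_def
        complex_eq_iff)
qed

lemma pb_cov_linear:
  assumes "linear \<iota>"
  shows "pb_cov \<iota> (\<eta> + \<eta>') = pb_cov \<iota> \<eta> + pb_cov \<iota> \<eta>'" and "pb_cov \<iota> 0 = 0"
  using adjoint_linear[OF assms] by (simp_all add: pb_cov_eq[OF assms] linear_add linear_0)

lemma zero_in_pbT: "linear \<iota> \<Longrightarrow> 0 \<in> U \<Longrightarrow> 0 \<in> pbT \<iota> U"
  by (auto simp: pbT_iff cx_linear pb_cov_linear zero_prod_def intro!: exI[of _ 0])

lemma pbT_bar:
  assumes "linear \<iota>"
  shows "pbT \<iota> (bar U) = bar (pbT \<iota> U)"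
proof -
  have cnj_cx: "cnjV (cx \<iota> X) = cx \<iota> (cnjV X)" for X
    using assms by (simp add: cnjV_eq_cmb cx_def linear_neg)
  have cnj_pb: "cnjV (pb_cov \<iota> \<eta>) = pb_cov \<iota> (cnjV \<eta>)" for \<eta>
    using adjoint_linear[OF assms] by (simp add: cnjV_eq_cmb pb_cov_eq[OF assms] linear_neg)
  show ?thesis
  proof (intro set_eqI)
    fix u
    have "u \<in> pbT \<iota> (bar U) \<longleftrightarrow>
        (\<exists>\<eta>. (cx \<iota> (cnjV (fst u)), cnjV \<eta>) \<in> U \<and> snd u = pb_cov \<iota> \<eta>)"
      by (simp add: pbT_iff bar_iff cnjT_eq cnj_cx)
    also have "\<dots> \<longleftrightarrow> (\<exists>\<eta>. (cx \<iota> (cnjV (fst u)), \<eta>) \<in> U \<and> cnjV (snd u) = pb_cov \<iota> \<eta>)"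
    proof
      assume "\<exists>\<eta>. (cx \<iota> (cnjV (fst u)), cnjV \<eta>) \<in> U \<and> snd u = pb_cov \<iota> \<eta>"
      then show "\<exists>\<eta>. (cx \<iota> (cnjV (fst u)), \<eta>) \<in> U \<and> cnjV (snd u) = pb_cov \<iota> \<eta>"
        by (auto simp: cnj_pb)
    next
      assume "\<exists>\<eta>. (cx \<iota> (cnjV (fst u)), \<eta>) \<in> U \<and> cnjV (snd u) = pb_cov \<iota> \<eta>"
      then obtain \<eta> where "(cx \<iota> (cnjV (fst u)), \<eta>) \<in> U" "snd u = cnjV (pb_cov \<iota> \<eta>)"
        by (metis cnjV_cnjV)
      then show "\<exists>\<eta>. (cx \<iota> (cnjV (fst u)), cnjV \<eta>) \<in> U \<and> snd u = pb_cov \<iota> \<eta>"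
        by (intro exI[of _ "cnjV \<eta>"]) (simp add: cnj_pb)
    qed
    also have "\<dots> \<longleftrightarrow> u \<in> bar (pbT \<iota> U)"
      by (simp add: pbT_iff bar_iff cnjT_eq)
    finally show "u \<in> pbT \<iota> (bar U) \<longleftrightarrow> u \<in> bar (pbT \<iota> U)" .
  qed
qed

section \<open>The associated triple\<close>

lemma reV_Fop: "reV (Fop F J Z) = fst (F (reT (tau F J Z)))"
  by (simp add: Fop_def cxT_eq_cmbT cmbT_def)

definition metric_flat ::
  "('m::finite gtan \<Rightarrow> 'm gtan) \<Rightarrow> ('m gtan \<Rightarrow> 'm gtan) \<Rightarrow> real^'m \<Rightarrow> real^'m" where
  "metric_flat F J X = (THE \<alpha>. sharp F J \<alpha> = X)"

definition psi_flat ::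
  "('m::finite gtan \<Rightarrow> 'm gtan) \<Rightarrow> ('m gtan \<Rightarrow> 'm gtan) \<Rightarrow> real^'m \<Rightarrow> real^'m" where
  "psi_flat F J X = - metric_flat F J (Qop F J X)"

definition graph_point ::
  "('m::finite gtan \<Rightarrow> 'm gtan) \<Rightarrow> ('m gtan \<Rightarrow> 'm gtan) \<Rightarrow>
    real^'m \<Rightarrow> real^'m \<Rightarrow> 'm gtan" where
  "graph_point F J A B = (A, psi_flat F J A + metric_flat F J B)"

locale gaph_pair =
  fixes F J :: "'m::finite gtan \<Rightarrow> 'm gtan"
  assumes gaph: "gaph F J"
begin

lemma linear_F: "linear F" and linear_J: "linear J"
  using gaph by (simp_all add: gaph_def)

sublocale F: linear F by (rule linear_F)
sublocale J: linear J by (rule linear_J)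

lemma F_F [simp]: "F (F u) = u"
  and J_J [simp]: "J (J u) = - u"
  and F_skew: "gR (F u) v = - gR u (F v)"
  and J_skew: "gR (J u) v = - gR u (J v)"
  and bivec_sym: "bivec F J \<alpha> \<beta> = bivec F J \<beta> \<alpha>"
  and bivec_nondegenerate: "(\<And>\<beta>. bivec F J \<alpha> \<beta> = 0) \<Longrightarrow> \<alpha> = 0"
  using gaph unfolding gaph_def by blast+

lemma J_F [simp]: "J (F u) = F (J u)"
  using gaph unfolding gaph_def by metis

lemma H_H [simp]: "F (J (F (J u))) = - u"
  by (simp add: F.neg)

lemmas linear_simps = F.add F.diff F.neg F.scale J.add J.diff J.neg J.scale

lemma bivec_eq_inner: "bivec F J \<beta> \<alpha> = \<beta> \<bullet> fst (F (J (0, \<alpha>)))"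
proof -
  have "bivec F J \<beta> \<alpha> = 2 * gR (0, \<beta>) (F (J (0, \<alpha>)))"
    by (simp add: bivec_def F_skew)
  then show ?thesis
    by (cases "F (J (0, \<alpha>))") (simp add: gR_def)
qed

lemma sharp_eq: "sharp F J \<alpha> = fst (F (J (0, \<alpha>)))"
  using bivec_sym[of \<alpha>] by (simp add: sharp_def vec_eq_iff bivec_eq_inner inner_axis')

lemma linear_sharp: "linear (sharp F J)"
proof (rule linearI)
  fix \<alpha> \<beta> :: "real^'m" and c :: real
  have "(0, \<alpha> + \<beta>) = (0, \<alpha>) + ((0, \<beta>) :: 'm gtan)" and "(0, c *\<^sub>R \<alpha>) = c *\<^sub>R ((0, \<alpha>) :: 'm gtan)"
    by simp_all
  then show "sharp F J (\<alpha> + \<beta>) = sharp F J \<alpha> + sharp F J \<beta>"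
    and "sharp F J (c *\<^sub>R \<alpha>) = c *\<^sub>R sharp F J \<alpha>"
    by (simp_all only: sharp_eq linear_simps fst_add fst_scaleR)
qed

lemma bij_sharp: "bij (sharp F J)"
proof -
  have "\<alpha> = 0" if "sharp F J \<alpha> = 0" for \<alpha>
  proof (rule bivec_nondegenerate)
    have "bivec F J \<alpha> \<beta> = \<beta> \<bullet> sharp F J \<alpha>" for \<beta>
      unfolding sharp_eq bivec_eq_inner[symmetric] by (rule bivec_sym)
    then show "bivec F J \<alpha> \<beta> = 0" for \<beta>
      using that by simp
  qed
  then have "inj (sharp F J)"
    using linear_sharp by (simp add: linear_injective_0)
  then show ?thesis
    using linear_sharp linear_injective_imp_surjective by (blast intro: bijI)
qed

lemma metric_flat_eq_inv: "metric_flat F J X = inv (sharp F J) X"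
  unfolding metric_flat_def
proof (rule the_equality)
  show "sharp F J (inv (sharp F J) X) = X"
    using bij_sharp by (simp add: bij_is_surj surj_f_inv_f)
  show "\<alpha> = inv (sharp F J) X" if "sharp F J \<alpha> = X" for \<alpha>
    using bij_sharp that by (metis bij_is_inj inv_f_f)
qed

lemma sharp_metric_flat [simp]: "sharp F J (metric_flat F J X) = X"
  using bij_sharp by (simp add: metric_flat_eq_inv bij_is_surj surj_f_inv_f)

lemma metric_flat_sharp [simp]: "metric_flat F J (sharp F J \<alpha>) = \<alpha>"
  using bij_sharp by (simp add: metric_flat_eq_inv bij_is_inj)

sublocale flat: linear "metric_flat F J"
  unfolding metric_flat_eq_inv[abs_def]
  using linear_sharp bij_sharp by (simp add: bij_is_inj inj_linear_imp_inv_linear)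

sublocale Q: linear "Qop F J"
proof (rule linearI)
  fix X Y :: "real^'m" and c :: real
  have "(X + Y, 0) = (X, 0) + ((Y, 0) :: 'm gtan)" and "(c *\<^sub>R X, 0) = c *\<^sub>R ((X, 0) :: 'm gtan)"
    by simp_all
  then show "Qop F J (X + Y) = Qop F J X + Qop F J Y" and "Qop F J (c *\<^sub>R X) = c *\<^sub>R Qop F J X"
    by (simp_all only: Qop_def linear_simps fst_add fst_scaleR)
qed

sublocale psi_flat: linear "psi_flat F J"
  by (rule linearI) (simp_all add: psi_flat_def Q.add Q.scale flat.add flat.scale)

lemma graph_point_add:
  "graph_point F J A B + graph_point F J A' B' = graph_point F J (A + A') (B + B')"
  by (simp add: graph_point_def psi_flat.add flat.add)

lemma graph_point_scale: "c *\<^sub>R graph_point F J A B = graph_point F J (c *\<^sub>R A) (c *\<^sub>R B)"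
  by (simp add: graph_point_def psi_flat.scale flat.scale scaleR_add_right)

lemma graph_point_minus: "- graph_point F J A B = graph_point F J (- A) (- B)"
  by (simp add: graph_point_def psi_flat.neg flat.neg)

lemma metric_eq_inner: "metric F J X Y = metric_flat F J X \<bullet> Y"
  unfolding metric_def metric_flat_def[symmetric]
  by (simp add: bivec_eq_inner sharp_eq[symmetric])

lemma metric_sym: "metric F J X Y = metric F J Y X"
  unfolding metric_def by (rule bivec_sym)

lemma psi_eq_inner: "psi F J X Y = psi_flat F J X \<bullet> Y"
  by (simp add: psi_def psi_flat_def metric_eq_inner)

lemma H_metric_flat: "F (J (0, metric_flat F J Z)) = (Z, psi_flat F J Z)"
proof -
  obtain s where s: "F (J (0, metric_flat F J Z)) = (Z, s)"
    using sharp_eq[of "metric_flat F J Z"] by (metis prod.collapse sharp_metric_flat)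
  have "(Z, s) = (Z, 0) + ((0, s) :: 'm gtan)"
    by simp
  then have "F (J (Z, 0)) + F (J (0, s)) = - (0, metric_flat F J Z)"
    using H_H[of "(0, metric_flat F J Z)"] by (simp only: s linear_simps)
  then have "Qop F J Z + sharp F J s = 0"
    unfolding Qop_def sharp_eq by (metis fst_add fst_conv fst_uminus neg_0_equal_iff_equal)
  then have "s = metric_flat F J (- Qop F J Z)"
    by (metis metric_flat_sharp add.commute add_eq_0_iff)
  then show ?thesis
    using s by (simp add: psi_flat_def flat.neg)
qed

lemma H_graph_point: "F (J (graph_point F J A B)) = graph_point F J B (- A)"
proof -
  have split: "graph_point F J A B = F (J (0, metric_flat F J A)) + (0, metric_flat F J B)"
    by (simp add: graph_point_def H_metric_flat)
  have "F (J (graph_point F J A B)) =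
      F (J (F (J (0, metric_flat F J A)))) + F (J (0, metric_flat F J B))"
    unfolding split by (simp only: linear_simps)
  also have "\<dots> = - (0, metric_flat F J A) + (B, psi_flat F J B)"
    by (simp only: H_H[of "(0, metric_flat F J A)"] H_metric_flat[of B])
  finally show ?thesis
    by (simp add: graph_point_def flat.neg)
qed

lemma fst_graph_point [simp]: "fst (graph_point F J A B) = A"
  by (simp add: graph_point_def)

lemma graph_point_fst_H: "graph_point F J (fst r) (fst (F (J r))) = r"
proof -
  define d where "d = r - graph_point F J (fst r) (fst (F (J r)))"
  have "fst d = 0"
    by (simp add: d_def)
  moreover have "fst (F (J d)) = 0"
    by (simp add: d_def linear_simps H_graph_point)
  ultimately have "sharp F J (snd d) = 0"
    by (metis prod.collapse sharp_eq)
  then have "snd d = 0"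
    by (metis metric_flat_sharp flat.zero)
  with \<open>fst d = 0\<close> show ?thesis
    by (simp add: d_def prod_eq_iff)
qed

lemma reT_tau: "reT (tau F J Y) = graph_point F J (reV Y) (- imV Y)"
  and imT_tau: "imT (tau F J Y) = graph_point F J (imV Y) (reV Y)"
proof -
  have "snd (tau F J Y) $ j =
      Complex (psi_flat F J (reV Y) $ j - metric_flat F J (imV Y) $ j)
              (psi_flat F J (imV Y) $ j + metric_flat F J (reV Y) $ j)" for j
    by (simp add: tau_def cxb_def psi_eq_inner metric_eq_inner inner_axis complex_eq_iff)
  then show "reT (tau F J Y) = graph_point F J (reV Y) (- imV Y)"
    and "imT (tau F J Y) = graph_point F J (imV Y) (reV Y)"
    by (simp_all add: reT_def imT_def graph_point_def tau_def reV_def imV_def vec_eq_iff flat.neg)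
qed

lemma fst_tau [simp]: "fst (tau F J Y) = Y"
  by (simp add: tau_def)

lemma tau_add: "tau F J (Y + Y') = tau F J Y + tau F J Y'"
  by (simp add: cgtan_eq_iff reT_tau imT_tau graph_point_add)

lemma tau_in_Hbun: "tau F J Y \<in> Hbun F J"
  by (simp add: Hbun_iff reT_tau imT_tau H_graph_point graph_point_minus)

lemma tau_fst_Hbun: "u \<in> Hbun F J \<Longrightarrow> tau F J (fst u) = u"
  using graph_point_fst_H[of "reT u"] graph_point_fst_H[of "imT u"]
  by (simp add: Hbun_iff cgtan_eq_iff reT_tau imT_tau) (simp add: reT_def imT_def)

lemma snd_tau_real: "snd (tau F J (cmb Z 0)) = cmb (psi_flat F J Z) (metric_flat F J Z)"
proof -
  have "reT (tau F J (cmb Z 0)) = (Z, psi_flat F J Z)"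
    and "imT (tau F J (cmb Z 0)) = (0, metric_flat F J Z)"
    by (simp_all add: reT_tau imT_tau graph_point_def)
  then show ?thesis
    by (metis cmb_reV_imV reT_def imT_def snd_conv)
qed

section \<open>Eigenbundle decompositions\<close>

lemma Hplus_iff: "u \<in> Hplus F J \<longleftrightarrow>
    F (reT u) = reT u \<and> F (imT u) = imT u \<and> F (J (reT u)) = - imT u \<and> F (J (imT u)) = reT u"
  by (auto simp: Hplus_def Fplus_iff Hbun_iff)

lemma Hminus_iff: "u \<in> Hminus F J \<longleftrightarrow>
    F (reT u) = - reT u \<and> F (imT u) = - imT u \<and> F (J (reT u)) = - imT u \<and> F (J (imT u)) = reT u"
  by (auto simp: Hminus_def Fminus_iff Hbun_iff)

lemma bar_Hplus_iff: "u \<in> bar (Hplus F J) \<longleftrightarrow>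
    F (reT u) = reT u \<and> F (imT u) = imT u \<and> F (J (reT u)) = imT u \<and> F (J (imT u)) = - reT u"
  by (auto simp: bar_iff Hplus_iff linear_simps minus_eq_iff_eq_minus)

lemma bar_Hminus_iff: "u \<in> bar (Hminus F J) \<longleftrightarrow>
    F (reT u) = - reT u \<and> F (imT u) = - imT u \<and> F (J (reT u)) = imT u \<and> F (J (imT u)) = - reT u"
  by (auto simp: bar_iff Hminus_iff linear_simps minus_eq_iff_eq_minus)

lemma bar_Jeig_iff: "u \<in> bar (Jeig J) \<longleftrightarrow> J (reT u) = imT u \<and> J (imT u) = - reT u"
  by (auto simp: bar_iff Jeig_iff J.neg minus_eq_iff_eq_minus)

lemma zero_in_H [simp]:
  "0 \<in> Hplus F J" "0 \<in> Hminus F J" "0 \<in> bar (Hplus F J)" "0 \<in> bar (Hminus F J)"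
  by (simp_all add: Hplus_iff Hminus_iff bar_Hplus_iff bar_Hminus_iff)

lemma diff_in_H:
  "a \<in> Hplus F J \<Longrightarrow> b \<in> Hplus F J \<Longrightarrow> a - b \<in> Hplus F J"
  "a \<in> Hminus F J \<Longrightarrow> b \<in> Hminus F J \<Longrightarrow> a - b \<in> Hminus F J"
  "a \<in> bar (Hplus F J) \<Longrightarrow> b \<in> bar (Hplus F J) \<Longrightarrow> a - b \<in> bar (Hplus F J)"
  "a \<in> bar (Hminus F J) \<Longrightarrow> b \<in> bar (Hminus F J) \<Longrightarrow> a - b \<in> bar (Hminus F J)"
  by (simp_all add: Hplus_iff Hminus_iff bar_Hplus_iff bar_Hminus_iff linear_simps)

lemma Fplus_eq_setsum2: "Fplus F = setsum2 (Hplus F J) (bar (Hplus F J))"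
proof (intro set_eqI iffI)
  fix u assume "u \<in> Fplus F"
  then have r: "F (reT u) = reT u" and s: "F (imT u) = imT u"
    by (simp_all add: Fplus_iff)
  have Jr: "F (J (reT u)) = J (reT u)" and Js: "F (J (imT u)) = J (imT u)"
    by (metis J_F r, metis J_F s)
  define a where "a = cmbT ((1/2) *\<^sub>R (reT u + F (J (imT u)))) ((1/2) *\<^sub>R (imT u - F (J (reT u))))"
  have "a \<in> Hplus F J" and "u - a \<in> bar (Hplus F J)"
    using r s by (simp_all add: a_def Hplus_iff bar_Hplus_iff linear_simps algebra_simps Jr Js)
  then show "u \<in> setsum2 (Hplus F J) (bar (Hplus F J))"
    by (rule setsum2_diffI)
next
  fix u assume "u \<in> setsum2 (Hplus F J) (bar (Hplus F J))"
  then obtain a c where "a \<in> Hplus F J" "c \<in> bar (Hplus F J)" "u = a + c"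
    unfolding setsum2_def by blast
  then show "u \<in> Fplus F"
    by (simp add: Fplus_iff Hplus_iff bar_Hplus_iff linear_simps)
qed

lemma Fminus_eq_setsum2: "Fminus F = setsum2 (Hminus F J) (bar (Hminus F J))"
proof (intro set_eqI iffI)
  fix u assume "u \<in> Fminus F"
  then have r: "F (reT u) = - reT u" and s: "F (imT u) = - imT u"
    by (simp_all add: Fminus_iff)
  have Jr: "F (J (reT u)) = - J (reT u)" and Js: "F (J (imT u)) = - J (imT u)"
    by (metis J_F J.neg r, metis J_F J.neg s)
  define a where "a = cmbT ((1/2) *\<^sub>R (reT u + F (J (imT u)))) ((1/2) *\<^sub>R (imT u - F (J (reT u))))"
  have "a \<in> Hminus F J" and "u - a \<in> bar (Hminus F J)"
    using r s by (simp_all add: a_def Hminus_iff bar_Hminus_iff linear_simps algebra_simps Jr Js)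
  then show "u \<in> setsum2 (Hminus F J) (bar (Hminus F J))"
    by (rule setsum2_diffI)
next
  fix u assume "u \<in> setsum2 (Hminus F J) (bar (Hminus F J))"
  then obtain a c where "a \<in> Hminus F J" "c \<in> bar (Hminus F J)" "u = a + c"
    unfolding setsum2_def by blast
  then show "u \<in> Fminus F"
    by (simp add: Fminus_iff Hminus_iff bar_Hminus_iff linear_simps)
qed

lemma Hplus_bar_Hminus_subset_Jeig: "Hplus F J \<union> bar (Hminus F J) \<subseteq> Jeig J"
  by (auto simp: Hplus_iff bar_Hminus_iff Jeig_iff) (metis F_F F.neg)+

lemma Jeig_eq_setsum2: "Jeig J = setsum2 (Hplus F J) (bar (Hminus F J))"
proof (intro set_eqI iffI)
  fix u assume "u \<in> Jeig J"
  then have r: "J (reT u) = - imT u" and s: "J (imT u) = reT u"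
    by (simp_all add: Jeig_iff)
  define a where "a = (1/2) *\<^sub>R (u + cxT F u)"
  have "a \<in> Hplus F J" and "u - a \<in> bar (Hminus F J)"
    using r s by (simp_all add: a_def Hplus_iff bar_Hminus_iff linear_simps algebra_simps)
  then show "u \<in> setsum2 (Hplus F J) (bar (Hminus F J))"
    by (rule setsum2_diffI)
next
  fix u assume "u \<in> setsum2 (Hplus F J) (bar (Hminus F J))"
  then obtain a c where "a \<in> Hplus F J" "c \<in> bar (Hminus F J)" "u = a + c"
    unfolding setsum2_def by blast
  then have "a \<in> Jeig J" "c \<in> Jeig J" "u = a + c"
    using Hplus_bar_Hminus_subset_Jeig by blast+
  then show "u \<in> Jeig J"
    by (simp add: Jeig_iff J.add)
qed

lemma Hbun_eq_setsum2: "Hbun F J = setsum2 (Hplus F J) (Hminus F J)"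
proof (intro set_eqI iffI)
  fix u assume "u \<in> Hbun F J"
  then have r: "F (J (reT u)) = - imT u" and s: "F (J (imT u)) = reT u"
    by (simp_all add: Hbun_iff)
  have Jr: "J (reT u) = - F (imT u)" and Js: "J (imT u) = F (reT u)"
    by (metis F_F F.neg r, metis F_F s)
  define a where "a = (1/2) *\<^sub>R (u + cxT F u)"
  have "a \<in> Hplus F J" and "u - a \<in> Hminus F J"
    using r s by (simp_all add: a_def Hplus_iff Hminus_iff linear_simps algebra_simps Jr Js)
  then show "u \<in> setsum2 (Hplus F J) (Hminus F J)"
    by (rule setsum2_diffI)
next
  fix u assume "u \<in> setsum2 (Hplus F J) (Hminus F J)"
  then obtain a c where "a \<in> Hplus F J" "c \<in> Hminus F J" "u = a + c"
    unfolding setsum2_def by blast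
  then show "u \<in> Hbun F J"
    by (simp add: Hbun_iff Hplus_iff Hminus_iff linear_simps)
qed

lemma Hbun_inter_bar: "u \<in> Hbun F J \<Longrightarrow> u \<in> bar (Hbun F J) \<Longrightarrow> u = 0"
  by (auto simp: Hbun_iff bar_iff linear_simps cgtan_eq_iff self_eq_minus_iff
      minus_eq_self_iff)

lemma Hplus_inter_bar: "Hplus F J \<inter> bar (Hplus F J) \<subseteq> {0}"
  and Hminus_inter_bar: "Hminus F J \<inter> bar (Hminus F J) \<subseteq> {0}"
  using Hbun_inter_bar by (auto simp: Hplus_def Hminus_def bar_iff)

lemma Fplus_Jeig_subset: "Fplus F \<inter> Jeig J \<subseteq> Hplus F J"
  unfolding subset_iff by (simp add: Fplus_iff Jeig_iff Hplus_iff linear_simps)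

lemma Fplus_bar_Jeig_subset: "Fplus F \<inter> bar (Jeig J) \<subseteq> bar (Hplus F J)"
  unfolding subset_iff by (simp add: Fplus_iff bar_Jeig_iff bar_Hplus_iff linear_simps)

lemma Fminus_bar_Jeig_subset: "Fminus F \<inter> bar (Jeig J) \<subseteq> Hminus F J"
  unfolding subset_iff by (simp add: Fminus_iff bar_Jeig_iff Hminus_iff linear_simps)

lemma Fminus_Jeig_subset: "Fminus F \<inter> Jeig J \<subseteq> bar (Hminus F J)"
  unfolding subset_iff by (simp add: Fminus_iff Jeig_iff bar_Hminus_iff linear_simps)

lemma Fplus_Fminus_sum_zero: "x \<in> Fplus F \<Longrightarrow> y \<in> Fminus F \<Longrightarrow> x + y = 0 \<Longrightarrow> x = 0"
  by (auto simp: Fplus_iff Fminus_iff add_eq_0_iff linear_simps cgtan_eq_iff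
      self_eq_minus_iff minus_eq_self_iff)

lemma Hbun_bar_sum_zero: "x \<in> Hbun F J \<Longrightarrow> y \<in> bar (Hbun F J) \<Longrightarrow> x + y = 0 \<Longrightarrow> x = 0"
  by (auto simp: Hbun_iff bar_iff add_eq_0_iff linear_simps cgtan_eq_iff
      self_eq_minus_iff minus_eq_self_iff)

lemma direct_sum4_H: "direct_sum4 (Hplus F J) (Hminus F J) (bar (Hplus F J)) (bar (Hminus F J))"
proof (rule direct_sum4I)
  fix u
  define p where "p = (1/2) *\<^sub>R (u + cxT F u)"
  define m where "m = (1/2) *\<^sub>R (u - cxT F u)"
  have "p \<in> Fplus F" and "m \<in> Fminus F"
    by (simp_all add: p_def m_def Fplus_iff Fminus_iff linear_simps algebra_simps)
  then obtain a b c d where "a \<in> Hplus F J" "c \<in> bar (Hplus F J)" "p = a + c"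
    and "b \<in> Hminus F J" "d \<in> bar (Hminus F J)" "m = b + d"
    unfolding Fplus_eq_setsum2 Fminus_eq_setsum2 setsum2_def by blast
  moreover have "u = p + m"
    by (simp add: p_def m_def algebra_simps)
  ultimately show "\<exists>a b c d. a \<in> Hplus F J \<and> b \<in> Hminus F J \<and> c \<in> bar (Hplus F J) \<and>
      d \<in> bar (Hminus F J) \<and> u = a + b + c + d"
    by (intro exI[of _ a] exI[of _ b] exI[of _ c] exI[of _ d]) (simp add: algebra_simps)
next
  fix a b c d
  assume a: "a \<in> Hplus F J" and b: "b \<in> Hminus F J" and c: "c \<in> bar (Hplus F J)"
    and d: "d \<in> bar (Hminus F J)" and sum: "a + b + c + d = 0"
  have "a + c \<in> Fplus F" and "b + d \<in> Fminus F"
    using a b c d unfolding Fplus_eq_setsum2 Fminus_eq_setsum2 setsum2_def by blast+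
  moreover have "(a + c) + (b + d) = 0"
    using sum by (simp add: algebra_simps)
  ultimately have ac: "a + c = 0"
    by (rule Fplus_Fminus_sum_zero)
  have "b + d = (a + b + c + d) - (a + c)"
    by (simp add: algebra_simps)
  with sum ac have bd: "b + d = 0"
    by simp
  have "a \<in> Hbun F J" "b \<in> Hbun F J" "c \<in> bar (Hbun F J)" "d \<in> bar (Hbun F J)"
    using a b c d by (auto simp: Hplus_def Hminus_def bar_iff)
  with ac bd have "a = 0" and "b = 0"
    using Hbun_bar_sum_zero by blast+
  with ac bd show "a = 0 \<and> b = 0 \<and> c = 0 \<and> d = 0"
    by simp
qed (simp_all add: diff_in_H)

lemma Fop_split:
  assumes "tau F J Y = a + b" and "a \<in> Hplus F J" and "b \<in> Hminus F J"
  shows "Fop F J Y = fst a - fst b"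
proof -
  have "cxT F a = a" and "cxT F b = - b"
    using assms(2,3) by (simp_all add: Hplus_def Hminus_def Fplus_def Fminus_def)
  then show ?thesis
    by (simp add: Fop_def assms(1) cxT_linear[OF linear_F])
qed

lemma pbT_Hbun_iff:
  assumes "U \<subseteq> Hbun F J"
  shows "u \<in> pbT \<iota> U \<longleftrightarrow>
    tau F J (cx \<iota> (fst u)) \<in> U \<and> snd u = pb_cov \<iota> (snd (tau F J (cx \<iota> (fst u))))"
proof
  assume "u \<in> pbT \<iota> U"
  then obtain \<eta> where \<eta>: "(cx \<iota> (fst u), \<eta>) \<in> U" "snd u = pb_cov \<iota> \<eta>"
    by (auto simp: pbT_iff)
  then have "tau F J (cx \<iota> (fst u)) = (cx \<iota> (fst u), \<eta>)"
    using tau_fst_Hbun[of "(cx \<iota> (fst u), \<eta>)"] assms \<eta>(1) by auto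
  with \<eta> show "tau F J (cx \<iota> (fst u)) \<in> U \<and>
      snd u = pb_cov \<iota> (snd (tau F J (cx \<iota> (fst u))))"
    by simp
next
  assume "tau F J (cx \<iota> (fst u)) \<in> U \<and> snd u = pb_cov \<iota> (snd (tau F J (cx \<iota> (fst u))))"
  moreover have "(cx \<iota> (fst u), snd (tau F J (cx \<iota> (fst u)))) = tau F J (cx \<iota> (fst u))"
    by (simp add: prod_eq_iff)
  ultimately show "u \<in> pbT \<iota> U"
    unfolding pbT_iff by metis
qed

end

section \<open>The structure induced on a regular invariant submanifold\<close>

locale regular_submanifold = gaph_pair F J
  for F J :: "'m::finite gtan \<Rightarrow> 'm gtan" +
  fixes \<iota> :: "real^'n::finite \<Rightarrow> real^'m" and \<rho> :: "real^'m \<Rightarrow> real^'n"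
  assumes linear_\<iota>: "linear \<iota>" and linear_\<rho>: "linear \<rho>" and \<rho>_\<iota> [simp]: "\<rho> (\<iota> X) = X"
    and regular: "regular_invariant F J \<iota>"
begin

sublocale \<iota>: linear \<iota> by (rule linear_\<iota>)
sublocale \<rho>: linear \<rho> by (rule linear_\<rho>)
sublocale adj: linear "adjoint \<iota>" by (rule adjoint_linear[OF linear_\<iota>])

definition pb_metric_flat :: "real^'n \<Rightarrow> real^'n" where
  "pb_metric_flat W = adjoint \<iota> (metric_flat F J (\<iota> W))"

definition pb_psi_flat :: "real^'n \<Rightarrow> real^'n" where
  "pb_psi_flat X = adjoint \<iota> (psi_flat F J (\<iota> X))"

lemma inner_pb_metric_flat: "pb_metric_flat W \<bullet> Y = metric F J (\<iota> W) (\<iota> Y)"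
  by (simp add: pb_metric_flat_def adjoint_clauses(2)[OF linear_\<iota>] metric_eq_inner)

sublocale pb_metric_flat: linear pb_metric_flat
  by (rule linearI) (simp_all add: pb_metric_flat_def \<iota>.add \<iota>.scale flat.add flat.scale adj.add adj.scale)

sublocale pb_psi_flat: linear pb_psi_flat
  by (rule linearI)
    (simp_all add: pb_psi_flat_def \<iota>.add \<iota>.scale psi_flat.add psi_flat.scale adj.add adj.scale)

lemma bij_pb_metric_flat: "bij pb_metric_flat"
proof -
  have "W = 0" if "pb_metric_flat W = 0" for W
  proof -
    have "\<forall>Y. pb_form \<iota> (metric F J) W Y = 0"
      using that by (simp add: pb_form_def flip: inner_pb_metric_flat)
    then show "W = 0"
      using regular by (simp add: regular_invariant_def)
  qed
  then have "inj pb_metric_flat"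
    using pb_metric_flat.linear_axioms by (simp add: linear_injective_0)
  then show ?thesis
    using pb_metric_flat.linear_axioms linear_injective_imp_surjective by (blast intro: bijI)
qed

definition pb_metric_sharp :: "real^'n \<Rightarrow> real^'n" where
  "pb_metric_sharp = inv pb_metric_flat"

lemma pb_metric_flat_sharp [simp]: "pb_metric_flat (pb_metric_sharp v) = v"
  using bij_pb_metric_flat by (simp add: pb_metric_sharp_def bij_is_surj surj_f_inv_f)

lemma pb_metric_sharp_flat [simp]: "pb_metric_sharp (pb_metric_flat W) = W"
  using bij_pb_metric_flat by (simp add: pb_metric_sharp_def bij_is_inj)

sublocale pb_metric_sharp: linear pb_metric_sharp
  unfolding pb_metric_sharp_def using pb_metric_flat.linear_axioms bij_pb_metric_flat
  by (simp add: bij_is_inj inj_linear_imp_inv_linear)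

text \<open>The covector part of lift u is chosen so that pull (lift u) = u, see pull_graph_point.\<close>

definition lift :: "'n gtan \<Rightarrow> 'm gtan" where
  "lift u = graph_point F J (\<iota> (fst u)) (\<iota> (pb_metric_sharp (snd u - pb_psi_flat (fst u))))"

definition pull :: "'m gtan \<Rightarrow> 'n gtan" where
  "pull r = (\<rho> (fst r), adjoint \<iota> (snd r))"

definition lift_space :: "'m gtan set" where
  "lift_space = {r. fst r \<in> range \<iota> \<and> fst (F (J r)) \<in> range \<iota>}"

lemma linear_lift: "linear lift"
  by (rule linearI)
    (simp_all add: lift_def graph_point_add graph_point_scale \<iota>.add \<iota>.scale \<iota>.diff
      pb_metric_sharp.add pb_metric_sharp.scale pb_metric_sharp.diff
      pb_psi_flat.add pb_psi_flat.scale algebra_simps)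

lemma linear_pull: "linear pull"
  by (rule linearI) (simp_all add: pull_def \<rho>.add \<rho>.scale adj.add adj.scale)

lemma pull_graph_point: "pull (graph_point F J (\<iota> X) (\<iota> W)) = (X, pb_psi_flat X + pb_metric_flat W)"
  by (simp add: pull_def graph_point_def pb_psi_flat_def pb_metric_flat_def adj.add)

lemma pull_lift [simp]: "pull (lift u) = u"
  by (simp add: lift_def pull_graph_point)

lemma graph_point_in_lift_space: "graph_point F J (\<iota> X) (\<iota> W) \<in> lift_space"
  by (simp add: lift_space_def H_graph_point)

lemma lift_spaceE:
  assumes "r \<in> lift_space"
  obtains X W where "r = graph_point F J (\<iota> X) (\<iota> W)"
proof -
  obtain X W where "fst r = \<iota> X" and "fst (F (J r)) = \<iota> W"
    using assms by (auto simp: lift_space_def)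
  then have "r = graph_point F J (\<iota> X) (\<iota> W)"
    using graph_point_fst_H[of r] by simp
  then show ?thesis
    by (rule that)
qed

lemma lift_in_lift_space: "lift u \<in> lift_space"
  by (simp add: lift_def graph_point_in_lift_space)

lemma lift_pull: "r \<in> lift_space \<Longrightarrow> lift (pull r) = r"
  by (erule lift_spaceE) (simp add: pull_graph_point lift_def)

text \<open>The F-invariance of T^cN, applied to \<iota> X - i \<iota> W, whose tau has real part
  graph_point (\<iota> X) (\<iota> W).\<close>

lemma fst_F_graph_point: "fst (F (graph_point F J (\<iota> X) (\<iota> W))) \<in> range \<iota>"
proof -
  obtain Y where "Fop F J (cx \<iota> (cmb X (- W))) = cx \<iota> Y"
    using regular unfolding regular_invariant_def by blast
  moreover have "reT (tau F J (cx \<iota> (cmb X (- W)))) = graph_point F J (\<iota> X) (\<iota> W)"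
    by (simp add: cx_cmb reT_tau \<iota>.neg)
  ultimately have "fst (F (graph_point F J (\<iota> X) (\<iota> W))) = \<iota> (reV Y)"
    using reV_Fop[of F J "cx \<iota> (cmb X (- W))"] by (simp add: cx_def)
  then show ?thesis
    by simp
qed

lemma H_lift_space: "r \<in> lift_space \<Longrightarrow> F (J r) \<in> lift_space"
  by (erule lift_spaceE) (simp add: H_graph_point graph_point_in_lift_space flip: \<iota>.neg)

lemma F_lift_space:
  assumes "r \<in> lift_space"
  shows "F r \<in> lift_space"
proof -
  obtain X W where r: "r = graph_point F J (\<iota> X) (\<iota> W)"
    using assms by (rule lift_spaceE)
  have H: "F (J r) = graph_point F J (\<iota> W) (\<iota> (- X))"
    by (simp add: r H_graph_point \<iota>.neg)
  have "F (J (F r)) = F (graph_point F J (\<iota> W) (\<iota> (- X)))"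
    by (simp flip: H)
  then show ?thesis
    using fst_F_graph_point r by (simp add: lift_space_def)
qed

lemma J_lift_space: "r \<in> lift_space \<Longrightarrow> J r \<in> lift_space"
  using F_lift_space[OF H_lift_space] by simp

lemma gR_pull:
  assumes "r \<in> lift_space" and "r' \<in> lift_space"
  shows "gR (pull r) (pull r') = gR r r'"
  using assms by (auto simp: lift_space_def gR_def pull_def adjoint_clauses(2)[OF linear_\<iota>])

definition F_N :: "'n gtan \<Rightarrow> 'n gtan" where
  "F_N u = pull (F (lift u))"

definition J_N :: "'n gtan \<Rightarrow> 'n gtan" where
  "J_N u = pull (J (lift u))"

lemma lift_F_N: "lift (F_N u) = F (lift u)"
  by (simp add: F_N_def lift_pull F_lift_space lift_in_lift_space)

lemma lift_J_N: "lift (J_N u) = J (lift u)"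
  by (simp add: J_N_def lift_pull J_lift_space lift_in_lift_space)

lemma lift_covector: "lift (0, \<alpha>) = (0, metric_flat F J (\<iota> (pb_metric_sharp \<alpha>)))"
  by (simp add: lift_def graph_point_def pb_psi_flat_def)

lemma bivec_N: "bivec F_N J_N \<alpha> \<beta> = \<alpha> \<bullet> pb_metric_sharp \<beta>"
proof -
  have "bivec F_N J_N \<alpha> \<beta> = - 2 * gR (F (lift (0, \<alpha>))) (J (lift (0, \<beta>)))"
    using gR_pull[of "F (lift (0, \<alpha>))" "J (lift (0, \<beta>))"]
    by (simp add: bivec_def F_N_def J_N_def F_lift_space J_lift_space lift_in_lift_space)
  also have "\<dots> = bivec F J (metric_flat F J (\<iota> (pb_metric_sharp \<alpha>)))
      (metric_flat F J (\<iota> (pb_metric_sharp \<beta>)))"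
    by (simp add: lift_covector bivec_def)
  also have "\<dots> = metric_flat F J (\<iota> (pb_metric_sharp \<alpha>)) \<bullet> \<iota> (pb_metric_sharp \<beta>)"
    by (simp add: bivec_eq_inner flip: sharp_eq)
  also have "\<dots> = pb_metric_flat (pb_metric_sharp \<alpha>) \<bullet> pb_metric_sharp \<beta>"
    by (simp add: pb_metric_flat_def adjoint_clauses(2)[OF linear_\<iota>])
  also have "\<dots> = \<alpha> \<bullet> pb_metric_sharp \<beta>"
    by simp
  finally show ?thesis .
qed

lemma gaph_N: "gaph F_N J_N"
  unfolding gaph_def
proof (intro conjI allI impI)
  have "F_N = pull \<circ> (F \<circ> lift)" and "J_N = pull \<circ> (J \<circ> lift)"
    by (simp_all add: fun_eq_iff F_N_def J_N_def)
  then show "linear F_N" and "linear J_N"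
    by (simp_all add: linear_compose linear_lift linear_pull linear_F linear_J)
  fix u v
  show "F_N (F_N u) = u"
    unfolding F_N_def[of "F_N u"] by (simp add: lift_F_N)
  show "J_N (J_N u) = - u"
    unfolding J_N_def[of "J_N u"] by (simp add: lift_J_N linear_neg[OF linear_pull])
  show "F_N (J_N u) = J_N (F_N u)"
    unfolding F_N_def[of "J_N u"] J_N_def[of "F_N u"] by (simp add: lift_F_N lift_J_N)
  have pull_F: "pull (F (lift u)) = F_N u" and pull_J: "pull (J (lift u)) = J_N u" for u
    by (simp_all add: F_N_def J_N_def)
  have "gR (F_N u) v = gR (F (lift u)) (lift v)"
    using gR_pull[of "F (lift u)" "lift v"] by (simp add: pull_F F_lift_space lift_in_lift_space)
  also have "\<dots> = - gR (lift u) (F (lift v))"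
    by (rule F_skew)
  also have "gR (lift u) (F (lift v)) = gR u (F_N v)"
    using gR_pull[of "lift u" "F (lift v)"] by (simp add: pull_F F_lift_space lift_in_lift_space)
  finally show "gR (F_N u) v = - gR u (F_N v)" .
  have "gR (J_N u) v = gR (J (lift u)) (lift v)"
    using gR_pull[of "J (lift u)" "lift v"] by (simp add: pull_J J_lift_space lift_in_lift_space)
  also have "\<dots> = - gR (lift u) (J (lift v))"
    by (rule J_skew)
  also have "gR (lift u) (J (lift v)) = gR u (J_N v)"
    using gR_pull[of "lift u" "J (lift v)"] by (simp add: pull_J J_lift_space lift_in_lift_space)
  finally show "gR (J_N u) v = - gR u (J_N v)" .
next
  fix \<alpha> \<beta>
  show "bivec F_N J_N \<alpha> \<beta> = bivec F_N J_N \<beta> \<alpha>"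
    using inner_pb_metric_flat[of "pb_metric_sharp \<alpha>" "pb_metric_sharp \<beta>"]
      inner_pb_metric_flat[of "pb_metric_sharp \<beta>" "pb_metric_sharp \<alpha>"]
    by (simp add: bivec_N metric_sym)
next
  fix \<alpha>
  assume "\<forall>\<beta>. bivec F_N J_N \<alpha> \<beta> = 0"
  then have "\<alpha> \<bullet> pb_metric_sharp (pb_metric_flat \<alpha>) = 0"
    by (simp only: bivec_N)
  then have "\<alpha> \<bullet> \<alpha> = 0"
    by simp
  then show "\<alpha> = 0"
    by simp
qed

lemma fst_cxT_lift: "fst (cxT lift u) = cx \<iota> (fst u)"
  by (simp add: cxT_eq_cmbT cmbT_def lift_def cx_def reT_def imT_def)

lemma cxT_pull: "fst t = cx \<iota> X \<Longrightarrow> cxT pull t = (X, pb_cov \<iota> (snd t))"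
  by (simp add: cxT_eq_cmbT cmbT_def pull_def reT_def imT_def cx_def pb_cov_eq[OF linear_\<iota>])

lemma cxT_pull_lift: "cxT pull (cxT lift u) = u"
  by (simp add: cxT_comp cxT_id)

lemma reT_tau_in_lift_space: "reT (tau F J (cx \<iota> X)) \<in> lift_space"
  by (simp add: reT_tau cx_def graph_point_in_lift_space flip: \<iota>.neg)

lemma imT_tau_in_lift_space: "imT (tau F J (cx \<iota> X)) \<in> lift_space"
  by (simp add: imT_tau cx_def graph_point_in_lift_space)

lemma pbT_iff_lift:
  assumes "U \<subseteq> Hbun F J"
  shows "u \<in> pbT \<iota> U \<longleftrightarrow> cxT lift u \<in> U"
proof
  let ?t = "tau F J (cx \<iota> (fst u))"
  assume "u \<in> pbT \<iota> U"
  then have "?t \<in> U" and "snd u = pb_cov \<iota> (snd ?t)"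
    using pbT_Hbun_iff[OF assms] by blast+
  from this(2) have "cxT pull ?t = u"
    using cxT_pull[of ?t "fst u"] by (simp add: prod_eq_iff)
  then have "cxT lift u = cxT lift (cxT pull ?t)"
    by simp
  also have "\<dots> = ?t"
    using lift_pull[OF reT_tau_in_lift_space] lift_pull[OF imT_tau_in_lift_space]
    by (simp add: cgtan_eq_iff)
  finally show "cxT lift u \<in> U"
    using \<open>?t \<in> U\<close> by simp
next
  assume "cxT lift u \<in> U"
  moreover have "cxT lift u = (cx \<iota> (fst u), snd (cxT lift u))"
    by (simp add: prod_eq_iff fst_cxT_lift)
  moreover have "u = (fst u, pb_cov \<iota> (snd (cxT lift u)))"
    using cxT_pull[OF fst_cxT_lift, of u] by (simp only: cxT_pull_lift)
  ultimately show "u \<in> pbT \<iota> U"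
    unfolding pbT_iff by (intro exI[of _ "snd (cxT lift u)"]) (metis snd_conv)
qed

lemma Hplus_Hminus_induced:
  "Hplus F_N J_N = pbT \<iota> (Hplus F J) \<and> Hminus F_N J_N = pbT \<iota> (Hminus F J)"
proof -
  have inj: "inj lift"
    by (rule injI) (metis pull_lift)
  have F: "u \<in> Fplus F_N \<longleftrightarrow> cxT lift u \<in> Fplus F" "u \<in> Fminus F_N \<longleftrightarrow> cxT lift u \<in> Fminus F"
    for u using intertwining_eigen_iff[OF linear_lift inj, of F_N F] by (simp_all add: lift_F_N)
  have H: "u \<in> Hbun F_N J_N \<longleftrightarrow> cxT lift u \<in> Hbun F J" for u
    using intertwining_eigen_iff(3)[OF linear_lift inj, of "F_N \<circ> J_N" "F \<circ> J"]
    by (simp add: Hbun_eq_Jeig lift_F_N lift_J_N)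
  have "Hplus F J \<subseteq> Hbun F J" and "Hminus F J \<subseteq> Hbun F J"
    by (auto simp: Hplus_def Hminus_def)
  then show ?thesis
    by (simp add: set_eq_iff pbT_iff_lift Hplus_def Hminus_def F H)
qed

end

section \<open>Structures whose bundles H+ and H- are pullbacks\<close>

locale pulled_back_pair = M: gaph_pair F J + N: gaph_pair FN JN
  for F J :: "'m::finite gtan \<Rightarrow> 'm gtan" and FN JN :: "'n::finite gtan \<Rightarrow> 'n gtan" +
  fixes \<iota> :: "real^'n \<Rightarrow> real^'m"
  assumes linear_\<iota>: "linear \<iota>"
    and Hplus_eq: "Hplus FN JN = pbT \<iota> (Hplus F J)"
    and Hminus_eq: "Hminus FN JN = pbT \<iota> (Hminus F J)"
begin

lemma eigenbundles_pulled_back: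
  "direct_sum4 (pbT \<iota> (Hplus F J)) (pbT \<iota> (Hminus F J))
     (pbT \<iota> (bar (Hplus F J))) (pbT \<iota> (bar (Hminus F J))) \<and>
   Fplus FN = setsum2 (pbT \<iota> (Hplus F J)) (pbT \<iota> (bar (Hplus F J))) \<and>
   Fminus FN = setsum2 (pbT \<iota> (Hminus F J)) (pbT \<iota> (bar (Hminus F J))) \<and>
   Jeig JN = setsum2 (pbT \<iota> (Hplus F J)) (pbT \<iota> (bar (Hminus F J)))"
  unfolding pbT_bar[OF linear_\<iota>] Hplus_eq[symmetric] Hminus_eq[symmetric]
  by (intro conjI N.direct_sum4_H N.Fplus_eq_setsum2 N.Fminus_eq_setsum2 N.Jeig_eq_setsum2)

lemma tau_Fop_pulled_back:
  "snd (tau FN JN X) = pb_cov \<iota> (snd (tau F J (cx \<iota> X))) \<and> cx \<iota> (Fop FN JN X) = Fop F J (cx \<iota> X)"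
proof -
  obtain a b where a: "a \<in> Hplus FN JN" and b: "b \<in> Hminus FN JN" and ab: "tau FN JN X = a + b"
    using N.tau_in_Hbun[of X] unfolding N.Hbun_eq_setsum2 setsum2_def by blast
  have "Hplus F J \<subseteq> Hbun F J" and "Hminus F J \<subseteq> Hbun F J"
    by (auto simp: Hplus_def Hminus_def)
  then have ta: "tau F J (cx \<iota> (fst a)) \<in> Hplus F J" "snd a = pb_cov \<iota> (snd (tau F J (cx \<iota> (fst a))))"
    and tb: "tau F J (cx \<iota> (fst b)) \<in> Hminus F J" "snd b = pb_cov \<iota> (snd (tau F J (cx \<iota> (fst b))))"
    using a b unfolding Hplus_eq Hminus_eq by (simp_all add: M.pbT_Hbun_iff)
  have "X = fst a + fst b"
    using arg_cong[OF ab, of fst] by simp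
  then have tau_split: "tau F J (cx \<iota> X) = tau F J (cx \<iota> (fst a)) + tau F J (cx \<iota> (fst b))"
    by (simp add: cx_linear[OF linear_\<iota>] M.tau_add)
  have "snd (tau FN JN X) = pb_cov \<iota> (snd (tau F J (cx \<iota> X)))"
    using arg_cong[OF ab, of snd] ta(2) tb(2) by (simp add: tau_split pb_cov_linear[OF linear_\<iota>])
  moreover have "Fop FN JN X = fst a - fst b"
    by (rule N.Fop_split[OF ab a b])
  moreover have "Fop F J (cx \<iota> X) = cx \<iota> (fst a) - cx \<iota> (fst b)"
    using M.Fop_split[OF tau_split ta(1) tb(1)] by simp
  ultimately show ?thesis
    by (simp add: cx_linear[OF linear_\<iota>])
qed

lemma flats_pulled_back:
  "metric_flat FN JN Z = adjoint \<iota> (metric_flat F J (\<iota> Z)) \<and>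
   psi_flat FN JN Z = adjoint \<iota> (psi_flat F J (\<iota> Z))"
proof -
  have "cx \<iota> (cmb Z 0) = cmb (\<iota> Z) 0"
    by (simp add: cx_cmb linear_0[OF linear_\<iota>])
  then have "cmb (psi_flat FN JN Z) (metric_flat FN JN Z) =
      cmb (adjoint \<iota> (psi_flat F J (\<iota> Z))) (adjoint \<iota> (metric_flat F J (\<iota> Z)))"
    using tau_Fop_pulled_back[of "cmb Z 0"]
    by (simp add: N.snd_tau_real M.snd_tau_real pb_cov_eq[OF linear_\<iota>])
  then show ?thesis
    by (simp add: cmb_eq_iff)
qed

lemma metric_pulled_back: "metric FN JN = pb_form \<iota> (metric F J)"
  by (intro ext) (simp add: N.metric_eq_inner M.metric_eq_inner pb_form_def flats_pulled_back
      adjoint_clauses(2)[OF linear_\<iota>])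

lemma psi_pulled_back: "psi FN JN = pb_form \<iota> (psi F J)"
  by (intro ext) (simp add: N.psi_eq_inner M.psi_eq_inner pb_form_def flats_pulled_back
      adjoint_clauses(2)[OF linear_\<iota>])

lemma regular_invariant: "regular_invariant F J \<iota>"
  unfolding regular_invariant_def
proof (intro conjI allI impI)
  fix X
  assume "\<forall>Y. pb_form \<iota> (metric F J) X Y = 0"
  then have "metric_flat FN JN X \<bullet> metric_flat FN JN X = 0"
    by (simp add: N.metric_eq_inner flip: metric_pulled_back)
  then have "metric_flat FN JN X = 0"
    by simp
  then have "sharp FN JN (metric_flat FN JN X) = 0"
    using linear_0[OF N.linear_sharp] by simp
  then show "X = 0"
    by simp
next
  fix X
  show "\<exists>Y. Fop F J (cx \<iota> X) = cx \<iota> Y"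
    using tau_Fop_pulled_back[of X] by (intro exI[of _ "Fop FN JN X"]) simp
qed

end

lemma pulled_back_pair_of_regular_invariant:
  fixes F J :: "'m::finite gtan \<Rightarrow> 'm gtan" and \<iota> :: "real^'n::finite \<Rightarrow> real^'m"
  assumes "gaph F J" and "linear \<iota>" and "inj \<iota>" and "regular_invariant F J \<iota>"
  shows "\<exists>FN JN :: 'n gtan \<Rightarrow> 'n gtan. pulled_back_pair F J FN JN \<iota>"
proof -
  obtain \<rho> where "linear \<rho>" and "\<rho> \<circ> \<iota> = id"
    using linear_injective_left_inverse[OF assms(2,3)] by blast
  then interpret regular_submanifold F J \<iota> \<rho>
    using assms
    by (intro regular_submanifold.intro gaph_pair.intro regular_submanifold_axioms.intro)
      (simp_all add: pointfree_idE)
  have "pulled_back_pair F J F_N J_N \<iota>"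
    using assms gaph_N Hplus_Hminus_induced
    by (intro pulled_back_pair.intro gaph_pair.intro pulled_back_pair_axioms.intro) simp_all
  then show ?thesis
    by blast
qed

lemma pulled_back_pair_of_eigenbundles:
  fixes F J :: "'m::finite gtan \<Rightarrow> 'm gtan" and FN JN :: "'n::finite gtan \<Rightarrow> 'n gtan"
    and \<iota> :: "real^'n \<Rightarrow> real^'m"
  assumes "gaph F J" and "gaph FN JN" and "linear \<iota>"
    and Fplus_eq: "Fplus FN = setsum2 (pbT \<iota> (Hplus F J)) (pbT \<iota> (bar (Hplus F J)))"
    and Fminus_eq: "Fminus FN = setsum2 (pbT \<iota> (Hminus F J)) (pbT \<iota> (bar (Hminus F J)))"
    and Jeig_eq: "Jeig JN = setsum2 (pbT \<iota> (Hplus F J)) (pbT \<iota> (bar (Hminus F J)))"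
  shows "pulled_back_pair F J FN JN \<iota>"
proof -
  interpret M: gaph_pair F J by (rule gaph_pair.intro) fact
  interpret N: gaph_pair FN JN by (rule gaph_pair.intro) fact
  let ?P = "pbT \<iota> (Hplus F J)" and ?Q = "pbT \<iota> (Hminus F J)"
  have bar_P: "pbT \<iota> (bar (Hplus F J)) = bar ?P" and bar_Q: "pbT \<iota> (bar (Hminus F J)) = bar ?Q"
    using assms(3) by (simp_all add: pbT_bar)
  have zero: "0 \<in> ?P" "0 \<in> ?Q" "0 \<in> bar ?P" "0 \<in> bar ?Q"
    using assms(3) by (simp_all add: zero_in_pbT flip: bar_P bar_Q)
  have "?P \<subseteq> Jeig JN" and "bar ?Q \<subseteq> Jeig JN"
    using zero by (auto simp: Jeig_eq bar_Q intro: setsum2_left setsum2_right)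
  then have "?P \<subseteq> Fplus FN \<inter> Jeig JN" and "bar ?P \<subseteq> Fplus FN \<inter> bar (Jeig JN)"
    and "?Q \<subseteq> Fminus FN \<inter> bar (Jeig JN)" and "bar ?Q \<subseteq> Fminus FN \<inter> Jeig JN"
    using zero bar_mono[of ?P "Jeig JN"] bar_mono[of "bar ?Q" "Jeig JN"]
    by (auto simp: Fplus_eq Fminus_eq bar_P bar_Q intro: setsum2_left setsum2_right)
  then have P: "?P \<subseteq> Hplus FN JN" "bar ?P \<subseteq> bar (Hplus FN JN)"
    and Q: "?Q \<subseteq> Hminus FN JN" "bar ?Q \<subseteq> bar (Hminus FN JN)"
    using N.Fplus_Jeig_subset N.Fplus_bar_Jeig_subset N.Fminus_bar_Jeig_subset N.Fminus_Jeig_subset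
    by blast+
  have "Hplus FN JN = ?P"
  proof (rule setsum2_eq_left)
    show "Hplus FN JN \<subseteq> setsum2 ?P (bar ?P)"
      using Fplus_eq bar_P by (simp add: Hplus_def[of FN JN])
    show "bar ?P \<inter> Hplus FN JN \<subseteq> {0}"
      using P(2) N.Hplus_inter_bar by blast
  qed (use P(1) N.diff_in_H(1) in auto)
  moreover have "Hminus FN JN = ?Q"
  proof (rule setsum2_eq_left)
    show "Hminus FN JN \<subseteq> setsum2 ?Q (bar ?Q)"
      using Fminus_eq bar_Q by (simp add: Hminus_def[of FN JN])
    show "bar ?Q \<inter> Hminus FN JN \<subseteq> {0}"
      using Q(2) N.Hminus_inter_bar by blast
  qed (use Q(1) N.diff_in_H(2) in auto)
  ultimately show ?thesis
    using assms
    by (intro pulled_back_pair.intro gaph_pair.intro pulled_back_pair_axioms.intro) simp_all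
qed

theorem proposition4p1:
  fixes F J :: "'m::finite gtan \<Rightarrow> 'm gtan"
    and \<iota> :: "real^'n::finite \<Rightarrow> real^'m"
  assumes "gaph F J"
    and "linear \<iota>" and "inj \<iota>"
  shows "(regular_invariant F J \<iota> \<longleftrightarrow>
           (direct_sum4 (pbT \<iota> (Hplus F J)) (pbT \<iota> (Hminus F J))
                        (pbT \<iota> (bar (Hplus F J))) (pbT \<iota> (bar (Hminus F J))) \<and>
            (\<exists>FN JN :: 'n gtan \<Rightarrow> 'n gtan. gaph FN JN \<and>
               Fplus FN = setsum2 (pbT \<iota> (Hplus F J)) (pbT \<iota> (bar (Hplus F J))) \<and>
               Fminus FN = setsum2 (pbT \<iota> (Hminus F J)) (pbT \<iota> (bar (Hminus F J))) \<and>
               Jeig JN = setsum2 (pbT \<iota> (Hplus F J)) (pbT \<iota> (bar (Hminus F J)))))) \<and>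
         (\<forall>FN JN :: 'n gtan \<Rightarrow> 'n gtan.
           regular_invariant F J \<iota> \<and> gaph FN JN \<and>
           Fplus FN = setsum2 (pbT \<iota> (Hplus F J)) (pbT \<iota> (bar (Hplus F J))) \<and>
           Fminus FN = setsum2 (pbT \<iota> (Hminus F J)) (pbT \<iota> (bar (Hminus F J))) \<and>
           Jeig JN = setsum2 (pbT \<iota> (Hplus F J)) (pbT \<iota> (bar (Hminus F J))) \<longrightarrow>
           metric FN JN = pb_form \<iota> (metric F J) \<and>
           psi FN JN = pb_form \<iota> (psi F J) \<and>
           (\<forall>X. cx \<iota> (Fop FN JN X) = Fop F J (cx \<iota> X)))"
proof -
  note pair_of_eigenbundles = pulled_back_pair_of_eigenbundles[OF assms(1) _ assms(2)]
  show ?thesis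
    (is "(?RI \<longleftrightarrow> ?D \<and> (\<exists>FN JN. ?S FN JN)) \<and> (\<forall>FN JN. ?RI \<and> ?S FN JN \<longrightarrow> ?T FN JN)")
  proof (intro conjI[of "_ \<longleftrightarrow> _"] iffI allI impI)
    assume ?RI
    then obtain FN JN :: "'n gtan \<Rightarrow> 'n gtan" where "pulled_back_pair F J FN JN \<iota>"
      using pulled_back_pair_of_regular_invariant assms by blast
    then interpret pulled_back_pair F J FN JN \<iota> .
    show "?D \<and> (\<exists>FN JN. ?S FN JN)"
      using eigenbundles_pulled_back N.gaph by blast
  next
    assume "?D \<and> (\<exists>FN JN. ?S FN JN)"
    then obtain FN JN :: "'n gtan \<Rightarrow> 'n gtan" where "?S FN JN"
      by blast
    then interpret pulled_back_pair F J FN JN \<iota>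
      using pair_of_eigenbundles by blast
    show ?RI
      by (rule regular_invariant)
  next
    fix FN JN :: "'n gtan \<Rightarrow> 'n gtan"
    assume "?RI \<and> ?S FN JN"
    then interpret pulled_back_pair F J FN JN \<iota>
      using pair_of_eigenbundles by blast
    show "?T FN JN"
      using metric_pulled_back psi_pulled_back tau_Fop_pulled_back by blast
  qed
qed

end
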